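(* Let $(X_n,\|\cdot\|_n)_{n\ge1}$ be a sequence of Banach spaces, let $(X,\|\cdot\|)$ be the space defined in the context, and let $x=(x_1,x_2,\dots)$ be a nonzero vector of $X$. Then there exist $k\ge2$ and a sequence $(d_n)_{n\ge1}\subseteq(0,1]$ such that $d_n=1-\frac1{n+1}$ for all $n\ge k$ and $$\|x\|=\sum_{n=1}^\infty d_n\|x_n\|_n.$$
   Context: $c_{00}((X_n))$ is the vector space of sequences $(x_1,x_2,\dots)$ with $x_k\in X_k$ and only finitely many $x_k\ne0$; $(x_1,\dots,x_n)$ denotes $(x_1,\dots,x_n,0,0,\dots)$. On $c_{00}((X_n))$ define inductively $\|(x_1)\|=\|x_1\|_1$ (the norm of $X_1$) and, for $n\ge2$, $$\|(x_1,\dots,x_n)\|=\Big(1-\tfrac{1}{n+1}\Big)\big(\|x_n\|_n+\|(x_1,\dots,x_{n-1})\|\big)+\tfrac{1}{n+1}\max\Big\{\tfrac{\|x_n\|_n}{n},\ \|(x_1,\dots,x_{n-1})\|\Big\}.$$ $X$ is the completion of $(c_{00}((X_n)),\|\cdot\|)$, identified with the space of sequences $x=(x_n)$, $x_n\in X_n$, with $\sum_n\|x_n\|_n<\infty$, where $\|x\|=\lim_k\|(x_1,\dots,x_k)\|$. *)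

theory Defs
  imports "HOL-Analysis.Analysis"
begin

text \<open>A Banach space is modelled as a linear subspace V of an ambient real vector
space together with a norm N on V that is complete.  Any sequence of real
Banach spaces can be realised simultaneously in this way (e.g. inside their
product), so this is no loss of generality.\<close>

definition banach_on :: "'a::real_vector set \<Rightarrow> ('a \<Rightarrow> real) \<Rightarrow> bool" where
  "banach_on V N \<longleftrightarrow>
     subspace V \<and>
     (\<forall>v\<in>V. 0 \<le> N v) \<and>
     (\<forall>v\<in>V. N v = 0 \<longleftrightarrow> v = 0) \<and>
     (\<forall>v\<in>V. \<forall>c. N (c *\<^sub>R v) = \<bar>c\<bar> * N v) \<and>
     (\<forall>v\<in>V. \<forall>w\<in>V. N (v + w) \<le> N v + N w) \<and>
     (\<forall>s. (\<forall>k. s k \<in> V) \<longrightarrow>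
          (\<forall>e>0. \<exists>M. \<forall>m\<ge>M. \<forall>n\<ge>M. N (s m - s n) < e) \<longrightarrow>
          (\<exists>v\<in>V. (\<lambda>k. N (s k - v)) \<longlonglongrightarrow> 0))"

text \<open>Spaces and vectors are indexed from 1; index 0 is ignored.
  fnorm N x n is the norm of (x_1,...,x_n,0,0,...) in c00((X_n)).\<close>

fun fnorm :: "(nat \<Rightarrow> 'a \<Rightarrow> real) \<Rightarrow> (nat \<Rightarrow> 'a) \<Rightarrow> nat \<Rightarrow> real" where
  "fnorm N x 0 = 0"
| "fnorm N x (Suc 0) = N 1 (x 1)"
| "fnorm N x (Suc (Suc m)) =
     (1 - 1 / real (m + 3)) * (N (m + 2) (x (m + 2)) + fnorm N x (Suc m))
     + 1 / real (m + 3) * max (N (m + 2) (x (m + 2)) / real (m + 2)) (fnorm N x (Suc m))"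

text \<open>Norm of x in the completion X: the limit of the norms of its truncations.\<close>

definition Xnorm :: "(nat \<Rightarrow> 'a \<Rightarrow> real) \<Rightarrow> (nat \<Rightarrow> 'a) \<Rightarrow> real" where
  "Xnorm N x = lim (\<lambda>k. fnorm N x k)"

end

theory Submission imports Defs begin

text \<open>Unwinding the recursion, every truncation norm is a sum of the \<open>\<parallel>x\<^sub>j\<parallel>\<close> with weights in
  \<open>(0,1]\<close>.  The truncation norms increase, so once one is positive they stay above some \<open>\<delta> > 0\<close>;
  since \<open>\<parallel>x\<^sub>n\<parallel> \<rightarrow> 0\<close>, eventually \<open>\<parallel>x\<^sub>n\<parallel>/n\<close> is below the norm of the previous truncation, the
  maximum in the recursion is attained by its second argument, and each further step merely
  adds \<open>(1 - 1/(n+1)) \<parallel>x\<^sub>n\<parallel>\<close>.  The finitely many early weights followed by these give \<open>d\<close>.\<close>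

lemma fnorm_Suc:
  assumes "n \<ge> 1"
  shows "fnorm N x (Suc n) =
           (1 - 1 / real (n + 2)) * (N (Suc n) (x (Suc n)) + fnorm N x n)
           + 1 / real (n + 2) * max (N (Suc n) (x (Suc n)) / real (Suc n)) (fnorm N x n)"
  using assms by (cases n) (simp_all add: add.commute)

lemma fnorm_eq_weighted_sum:
  assumes "n \<ge> 1"
  shows "\<exists>c. (\<forall>j\<ge>1. 0 < c j \<and> c j \<le> 1) \<and> fnorm N x n = (\<Sum>j=1..n. c j * N j (x j))"
  using assms
proof (induction n rule: nat_induct_at_least)
  case base
  show ?case by (intro exI[of _ "\<lambda>_. 1"]) simp
next
  case (Suc n)
  then obtain c where c: "\<forall>j\<ge>1. 0 < c j \<and> c j \<le> 1"
    and f: "fnorm N x n = (\<Sum>j=1..n. c j * N j (x j))" by blast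
  define t where "t = 1 / real (n + 2)"
  define A where "A = N (Suc n) (x (Suc n))"
  have t: "0 < t" "t < 1" by (auto simp: t_def field_simps)
  moreover have "0 \<le> t / real (Suc n)" "t / real (Suc n) \<le> t" using t by (simp_all add: divide_le_eq)
  ultimately have w: "0 < 1 - t + t / real (Suc n)" "1 - t + t / real (Suc n) \<le> 1" by linarith+
  have step: "fnorm N x (Suc n) = (1 - t) * (A + fnorm N x n) + t * max (A / real (Suc n)) (fnorm N x n)"
    using fnorm_Suc[OF Suc.hyps] by (simp add: t_def A_def)
  \<comment> \<open>The old weights are kept or scaled by \<open>1 - t\<close>, according to which argument of max wins.\<close>
  define c' where "c' = (if A / real (Suc n) \<le> fnorm N x n
      then c(Suc n := 1 - t) else (\<lambda>j. (1 - t) * c j)(Suc n := 1 - t + t / real (Suc n)))"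
  have "\<forall>j\<ge>1. 0 < c' j \<and> c' j \<le> 1"
    using c t w by (auto simp: c'_def mult_le_one)
  moreover have "(\<Sum>j=1..n. c' j * N j (x j)) =
      (if A / real (Suc n) \<le> fnorm N x n then 1 else 1 - t) * (\<Sum>j=1..n. c j * N j (x j))"
    by (cases "A / real (Suc n) \<le> fnorm N x n") (auto simp: c'_def sum_distrib_left intro: sum.cong)
  then have "fnorm N x (Suc n) = (\<Sum>j=1..Suc n. c' j * N j (x j))"
    by (simp add: step f c'_def A_def max_def algebra_simps)
  ultimately show ?case by blast
qed

lemma fnorm_Suc_lower_bounds:
  assumes nonneg: "\<And>j. j \<ge> 1 \<Longrightarrow> 0 \<le> N j (x j)" and f: "0 \<le> fnorm N x n"
  shows "fnorm N x n \<le> fnorm N x (Suc n)"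
    and "(1 - 1 / real (n + 2)) * N (Suc n) (x (Suc n)) \<le> fnorm N x (Suc n)"
proof -
  define t where "t = 1 / real (n + 2)"
  define A where "A = N (Suc n) (x (Suc n))"
  have t: "0 \<le> t" "t \<le> 1" and A: "0 \<le> A" using nonneg[of "Suc n"] by (simp_all add: t_def A_def)
  have "fnorm N x (Suc n) = (1 - t) * A + ((1 - t) * fnorm N x n + t * max (A / real (Suc n)) (fnorm N x n))"
  proof (cases "n = 0")
    case True
    then show ?thesis using A by (simp add: t_def A_def)
  next
    case False
    then show ?thesis using fnorm_Suc[of n] by (simp add: t_def A_def algebra_simps)
  qed
  moreover have "t * fnorm N x n \<le> t * max (A / real (Suc n)) (fnorm N x n)"
    using t by (simp add: mult_left_mono)
  moreover have "0 \<le> (1 - t) * A" "0 \<le> (1 - t) * fnorm N x n" "0 \<le> t * fnorm N x n"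
    using t A f by simp_all
  ultimately show "fnorm N x n \<le> fnorm N x (Suc n)" "(1 - t) * A \<le> fnorm N x (Suc n)"
    by (simp_all add: algebra_simps)
qed

lemma fnorm_nonneg:
  assumes "\<And>j. j \<ge> 1 \<Longrightarrow> 0 \<le> N j (x j)"
  shows "0 \<le> fnorm N x n"
proof (induction n)
  case (Suc n)
  then show ?case using fnorm_Suc_lower_bounds(1)[of N x, OF assms] by (meson order_trans)
qed simp

lemma incseq_fnorm:
  assumes "\<And>j. j \<ge> 1 \<Longrightarrow> 0 \<le> N j (x j)"
  shows "incseq (fnorm N x)"
  using fnorm_Suc_lower_bounds(1)[of N x, OF assms fnorm_nonneg[of N x, OF assms]] by (simp add: incseq_SucI)

lemma fnorm_pos:
  assumes nonneg: "\<And>j. j \<ge> 1 \<Longrightarrow> 0 \<le> N j (x j)" and "n \<ge> 1" and "0 < N n (x n)"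
  shows "0 < fnorm N x n"
proof -
  obtain m where m: "n = Suc m" using \<open>n \<ge> 1\<close> by (cases n) auto
  have "0 < (1 - 1 / real (m + 2)) * N n (x n)" using \<open>0 < N n (x n)\<close> by simp
  also have "\<dots> \<le> fnorm N x n"
    using fnorm_Suc_lower_bounds(2)[of N x, OF nonneg fnorm_nonneg[of N x, OF nonneg]] m by simp
  finally show ?thesis .
qed

lemma fnorm_Suc_additive:
  assumes "n \<ge> 1" and "N (Suc n) (x (Suc n)) / real (Suc n) \<le> fnorm N x n"
  shows "fnorm N x (Suc n) = fnorm N x n + (1 - 1 / real (Suc n + 1)) * N (Suc n) (x (Suc n))"
  using fnorm_Suc[where N=N and x=x, OF assms(1)] assms(2) by (simp add: max_def algebra_simps)

lemma eventually_fnorm_Suc_additive: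
  assumes nonneg: "\<And>j. j \<ge> 1 \<Longrightarrow> 0 \<le> N j (x j)"
    and lim: "(\<lambda>n. N (Suc n) (x (Suc n))) \<longlonglongrightarrow> 0"
    and "m \<ge> 1" and "0 < N m (x m)"
  shows "\<exists>P\<ge>1. \<forall>n\<ge>P. N (Suc n) (x (Suc n)) / real (Suc n) \<le> fnorm N x n"
proof -
  define \<delta> where "\<delta> = fnorm N x m"
  have "0 < \<delta>" unfolding \<delta>_def using fnorm_pos[of N x, OF nonneg assms(3,4)] .
  then obtain M where M: "\<And>n. n \<ge> M \<Longrightarrow> N (Suc n) (x (Suc n)) < \<delta>"
    using order_tendstoD(2)[OF lim] by (auto simp: eventually_sequentially)
  have "N (Suc n) (x (Suc n)) / real (Suc n) \<le> fnorm N x n" if "n \<ge> M + m" for n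
  proof -
    have "N (Suc n) (x (Suc n)) / real (Suc n) \<le> N (Suc n) (x (Suc n))"
      using nonneg[of "Suc n"] by (simp add: divide_le_eq mult_le_cancel_left1)
    also have "\<dots> < \<delta>" using M that by simp
    also have "\<delta> \<le> fnorm N x n"
      unfolding \<delta>_def using incseq_fnorm[of N x, OF nonneg] that by (simp add: incseq_def)
    finally show ?thesis by simp
  qed
  then show ?thesis using \<open>m \<ge> 1\<close> by (intro exI[of _ "M + m"]) auto
qed

lemma fnorm_eq_tail_sum:
  assumes "P \<ge> 1" and additive: "\<forall>n\<ge>P. N (Suc n) (x (Suc n)) / real (Suc n) \<le> fnorm N x n"
    and "n \<ge> P"
  shows "fnorm N x n = fnorm N x P + (\<Sum>j=Suc P..n. (1 - 1 / real (j + 1)) * N j (x j))"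
  using \<open>n \<ge> P\<close>
proof (induction n rule: dec_induct)
  case (step k)
  then have "fnorm N x (Suc k) = fnorm N x k + (1 - 1 / real (Suc k + 1)) * N (Suc k) (x (Suc k))"
    using additive \<open>P \<ge> 1\<close> by (intro fnorm_Suc_additive) auto
  then show ?case using step.IH step.hyps(1) by simp
qed simp

lemma fnorm_eventually_weighted_sum:
  assumes nonneg: "\<And>j. j \<ge> 1 \<Longrightarrow> 0 \<le> N j (x j)"
    and lim: "(\<lambda>n. N (Suc n) (x (Suc n))) \<longlonglongrightarrow> 0"
    and "m \<ge> 1" and "0 < N m (x m)"
  shows "\<exists>k\<ge>2. \<exists>d. (\<forall>n\<ge>1. 0 < d n \<and> d n \<le> 1) \<and> (\<forall>n\<ge>k. d n = 1 - 1 / real (n + 1)) \<and>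
           (\<forall>n\<ge>k. fnorm N x n = (\<Sum>j=1..n. d j * N j (x j)))"
proof -
  obtain P where "P \<ge> 1" and additive: "\<forall>n\<ge>P. N (Suc n) (x (Suc n)) / real (Suc n) \<le> fnorm N x n"
    using eventually_fnorm_Suc_additive[of N x, OF assms] by blast
  obtain c where c: "\<forall>j\<ge>1. 0 < c j \<and> c j \<le> 1" and fP: "fnorm N x P = (\<Sum>j=1..P. c j * N j (x j))"
    using fnorm_eq_weighted_sum[OF \<open>P \<ge> 1\<close>, of N x] by blast
  define d where "d j = (if j \<le> P then c j else 1 - 1 / real (j + 1))" for j
  have "fnorm N x n = (\<Sum>j=1..n. d j * N j (x j))" if "n \<ge> P" for n
  proof -
    have "fnorm N x n = (\<Sum>j=1..P. d j * N j (x j)) + (\<Sum>j=Suc P..n. d j * N j (x j))"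
      using fnorm_eq_tail_sum[OF \<open>P \<ge> 1\<close> additive that] fP by (simp add: d_def)
    also have "\<dots> = (\<Sum>j=1..n. d j * N j (x j))"
      using sum.ub_add_nat[of 1 P "\<lambda>j. d j * N j (x j)" "n - P"] that by simp
    finally show ?thesis .
  qed
  moreover have "\<forall>n\<ge>1. 0 < d n \<and> d n \<le> 1" using c by (simp add: d_def field_simps)
  ultimately show ?thesis using \<open>P \<ge> 1\<close>
    by (intro exI[of _ "P + 1"] conjI exI[of _ d]) (auto simp: d_def)
qed

lemma weighted_sum_sums_Xnorm:
  assumes nonneg: "\<And>j. j \<ge> 1 \<Longrightarrow> 0 \<le> N j (x j)"
    and summ: "summable (\<lambda>n. N (Suc n) (x (Suc n)))"
    and d: "\<And>n. n \<ge> 1 \<Longrightarrow> \<bar>d n\<bar> \<le> 1"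
    and eq: "\<forall>n\<ge>k. fnorm N x n = (\<Sum>j=1..n. d j * N j (x j))"
  shows "(\<lambda>n. d (Suc n) * N (Suc n) (x (Suc n))) sums Xnorm N x"
proof -
  define g where "g = (\<lambda>n. d (Suc n) * N (Suc n) (x (Suc n)))"
  have "norm (g n) \<le> N (Suc n) (x (Suc n))" for n
    using d[of "Suc n"] nonneg[of "Suc n"] by (simp add: g_def abs_mult mult_left_le_one_le)
  then have "summable g" by (intro summable_comparison_test[OF _ summ]) auto
  then have "(\<lambda>n. \<Sum>i<n. g i) \<longlonglongrightarrow> suminf g" by (rule summable_LIMSEQ)
  moreover have "\<forall>\<^sub>F n in sequentially. (\<Sum>i<n. g i) = fnorm N x n"
    using eq by (intro eventually_sequentiallyI[of k]) (simp add: g_def sum.atLeast1_atMost_eq)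
  ultimately have "fnorm N x \<longlonglongrightarrow> suminf g" by (rule Lim_transform_eventually)
  then have "Xnorm N x = suminf g" unfolding Xnorm_def by (rule limI)
  then show ?thesis using summable_sums[OF \<open>summable g\<close>] by (simp only: g_def)
qed

theorem corollary1p6:
  fixes V :: "nat \<Rightarrow> 'a::real_vector set"
    and N :: "nat \<Rightarrow> 'a \<Rightarrow> real"
    and x :: "nat \<Rightarrow> 'a"
  assumes banach: "\<And>n. n \<ge> 1 \<Longrightarrow> banach_on (V n) (N n)"
    and mem: "\<And>n. n \<ge> 1 \<Longrightarrow> x n \<in> V n"
    and summ: "summable (\<lambda>n. N (n + 1) (x (n + 1)))"
    and nonzero: "\<exists>n\<ge>1. x n \<noteq> 0"
  shows "\<exists>k\<ge>2. \<exists>d :: nat \<Rightarrow> real.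
           (\<forall>n\<ge>1. 0 < d n \<and> d n \<le> 1) \<and>
           (\<forall>n\<ge>k. d n = 1 - 1 / real (n + 1)) \<and>
           (\<lambda>n. d (n + 1) * N (n + 1) (x (n + 1))) sums Xnorm N x"
proof -
  have nonneg: "0 \<le> N j (x j)" if "j \<ge> 1" for j
    using banach[OF that] mem[OF that] by (simp add: banach_on_def)
  obtain m where "m \<ge> 1" and "x m \<noteq> 0" using nonzero by blast
  then have "N m (x m) \<noteq> 0" using banach mem by (simp add: banach_on_def)
  with nonneg[OF \<open>m \<ge> 1\<close>] have "0 < N m (x m)" by simp
  moreover have "(\<lambda>n. N (Suc n) (x (Suc n))) \<longlonglongrightarrow> 0"
    using summable_LIMSEQ_zero[OF summ] by simp
  ultimately obtain k d where "k \<ge> 2" and d: "\<forall>n\<ge>1. 0 < d n \<and> d n \<le> 1"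
    and tail: "\<forall>n\<ge>k. d n = 1 - 1 / real (n + 1)"
    and eq: "\<forall>n\<ge>k. fnorm N x n = (\<Sum>j=1..n. d j * N j (x j))"
    using fnorm_eventually_weighted_sum[of N x, OF nonneg _ \<open>m \<ge> 1\<close>] by blast
  have "(\<lambda>n. d (Suc n) * N (Suc n) (x (Suc n))) sums Xnorm N x"
    using summ d by (intro weighted_sum_sums_Xnorm[OF nonneg _ _ eq]) auto
  then show ?thesis using \<open>k \<ge> 2\<close> d tail by auto
qed

end
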